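(* Let $L,A,Y$ be binary and consider the 7 binary random variables $(L,A(0),A(1),Y(0,0),Y(0,1),Y(1,0),Y(1,1))$, where $A(l)$ and $Y(l,a)$ are potential outcomes, and set $A:=A(L)$, $Y(a):=Y(L,a)$. View models as subsets of the probability simplex of joint distributions of these 7 variables. Then: the full model has dimension $2^7-1=127$; the weak ignorability model $\{A\perp\!\!\!\perp Y(a)\mid L \text{ for } a=0,1\}$ has dimension 123; the strong ignorability model $\{A\perp\!\!\!\perp (Y(0),Y(1))\mid L\}$ has dimension 121; and the NPSEM-IE model, defined by mutual independence $L\perp\!\!\!\perp (A(0),A(1))\perp\!\!\!\perp (Y(0,0),Y(0,1),Y(1,0),Y(1,1))$, has dimension 19. Hence the NPSEM-IE imposes $123-19=104$ constraints beyond weak ignorability.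
   Context: Dimension refers to the dimension of the model as a (semi-algebraic) subset of the 127-dimensional probability simplex on $\{0,1\}^7$. Conditional independences given $L$ are required for each value $l\in\{0,1\}$ (with $P(L=l)>0$). *)

theory Defs
  imports "HOL-Analysis.Analysis"
begin

text \<open>Sample space of the 7 binary variables
  (L, A(0), A(1), Y(0,0), Y(0,1), Y(1,0), Y(1,1)); True encodes 1, False encodes 0.\<close>
type_synonym omega = "bool \<times> bool \<times> bool \<times> bool \<times> bool \<times> bool \<times> bool"

type_synonym dist = "real ^ omega"

definition prob_simplex :: "dist set" where
  "prob_simplex = {p. (\<forall>w. 0 \<le> p $ w) \<and> (\<Sum>w\<in>UNIV. p $ w) = 1}"

definition jprob :: "dist \<Rightarrow> (omega \<Rightarrow> bool) \<Rightarrow> real" where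
  "jprob p E = (\<Sum>w\<in>{w. E w}. p $ w)"

definition varL :: "omega \<Rightarrow> bool" where
  "varL w = (case w of (l, a0, a1, y00, y01, y10, y11) \<Rightarrow> l)"
definition varApot :: "bool \<Rightarrow> omega \<Rightarrow> bool" where
  "varApot l w = (case w of (l', a0, a1, y00, y01, y10, y11) \<Rightarrow> (if l then a1 else a0))"
definition varYpot :: "bool \<Rightarrow> bool \<Rightarrow> omega \<Rightarrow> bool" where
  "varYpot l a w = (case w of (l', a0, a1, y00, y01, y10, y11) \<Rightarrow>
      (if l then (if a then y11 else y10) else (if a then y01 else y00)))"

definition varA :: "omega \<Rightarrow> bool" where
  "varA w = varApot (varL w) w"
definition varY :: "bool \<Rightarrow> omega \<Rightarrow> bool" where
  "varY a w = varYpot (varL w) a w"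

definition cond_indep :: "dist \<Rightarrow> (omega \<Rightarrow> 'x) \<Rightarrow> (omega \<Rightarrow> 'z) \<Rightarrow> (omega \<Rightarrow> 'c) \<Rightarrow> bool" where
  "cond_indep p X Z W =
     (\<forall>c. jprob p (\<lambda>w. W w = c) > 0 \<longrightarrow>
        (\<forall>x z. jprob p (\<lambda>w. X w = x \<and> Z w = z \<and> W w = c) * jprob p (\<lambda>w. W w = c)
             = jprob p (\<lambda>w. X w = x \<and> W w = c) * jprob p (\<lambda>w. Z w = z \<and> W w = c)))"

definition indep3 :: "dist \<Rightarrow> (omega \<Rightarrow> 'x) \<Rightarrow> (omega \<Rightarrow> 'y) \<Rightarrow> (omega \<Rightarrow> 'z) \<Rightarrow> bool" where
  "indep3 p X Y Z =
     (\<forall>x y z. jprob p (\<lambda>w. X w = x \<and> Y w = y \<and> Z w = z)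
        = jprob p (\<lambda>w. X w = x) * jprob p (\<lambda>w. Y w = y) * jprob p (\<lambda>w. Z w = z))"

definition weak_ign_model :: "dist set" where
  "weak_ign_model = {p \<in> prob_simplex. \<forall>a. cond_indep p varA (varY a) varL}"

definition strong_ign_model :: "dist set" where
  "strong_ign_model = {p \<in> prob_simplex. cond_indep p varA (\<lambda>w. (varY False w, varY True w)) varL}"

definition npsem_ie_model :: "dist set" where
  "npsem_ie_model = {p \<in> prob_simplex. indep3 p varL
      (\<lambda>w. (varApot False w, varApot True w))
      (\<lambda>w. (varYpot False False w, varYpot False True w, varYpot True False w, varYpot True True w))}"

text \<open>For semi-algebraic sets this is the usual dimension.\<close>
definition sa_dim :: "'a::euclidean_space set \<Rightarrow> nat" where
  "sa_dim S = Max {d. \<exists>(V::'a set) U f. subspace V \<and> dim V = d \<and> U \<subseteq> V \<and> U \<noteq> {} \<and>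
       openin (top_of_set V) U \<and> continuous_on U f \<and> inj_on f U \<and> f ` U \<subseteq> S}"

end

theory Submission
  imports Defs
begin

text \<open>Each model is shown to have dimension d by exhibiting a d-dimensional coordinate
  subspace V, a continuous chart from a nonempty open piece of V into the model, and a
  continuous injection of the whole model back into V; invariance of domain turns the
  injection into the upper bound.

  For the simplex and the two ignorability models the chart starts from the uniform
  distribution, moves it along V and then repairs each conditional independence equation
  P(A=1, Z=z, L=l) P(L=l) = P(A=1, L=l) P(Z=z, L=l) along an interaction direction inside
  the table of (A, Z) in stratum l.  Such a direction changes the first factor by one and
  leaves every other term of every equation unchanged, so each equation removes exactly
  one coordinate: 4 equations for weak and 6 for strong ignorability, besides the total
  mass.  Under the NPSEM-IE a distribution is the product of the marginals of L,
  (A(0), A(1)) and the four Y(l,a), which are free on 1 + 3 + 15 = 19 parameters.\<close>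

section \<open>Dimension via invariance of domain\<close>

lemma sa_dim_eqI:
  fixes S V U :: "'a::euclidean_space set" and \<phi> \<psi> :: "'a \<Rightarrow> 'a"
  assumes V: "subspace V" and U: "openin (top_of_set V) U" "U \<noteq> {}"
    and \<phi>: "continuous_on U \<phi>" "\<phi> ` U \<subseteq> S" and left_inverse: "\<And>x. x \<in> U \<Longrightarrow> \<psi> (\<phi> x) = x"
    and \<psi>: "continuous_on S \<psi>" "inj_on \<psi> S" "\<psi> ` S \<subseteq> V"
  shows "sa_dim S = dim V"
proof -
  define D where "D = {d. \<exists>(V::'a set) U f. subspace V \<and> dim V = d \<and> U \<subseteq> V \<and> U \<noteq> {} \<and>
       openin (top_of_set V) U \<and> continuous_on U f \<and> inj_on f U \<and> f ` U \<subseteq> S}"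
  have "inj_on \<phi> U"
    using left_inverse by (metis inj_onI)
  then have "subspace V \<and> dim V = dim V \<and> U \<subseteq> V \<and> U \<noteq> {} \<and> openin (top_of_set V) U \<and>
      continuous_on U \<phi> \<and> inj_on \<phi> U \<and> \<phi> ` U \<subseteq> S"
    using V U \<phi> openin_imp_subset[OF U(1)] by simp
  then have "dim V \<in> D"
    unfolding D_def by blast
  moreover have upper: "d \<le> dim V" if "d \<in> D" for d
  proof -
    obtain V' U' :: "'a set" and f :: "'a \<Rightarrow> 'a"
      where V': "subspace V'" "dim V' = d" "U' \<noteq> {}" "openin (top_of_set V') U'"
      and f: "continuous_on U' f" "inj_on f U'" "f ` U' \<subseteq> S"
      using \<open>d \<in> D\<close> unfolding D_def by blast
    have "dim V' \<le> dim V"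
    proof (rule invariance_of_dimension_subspaces[OF V'(4,1) V _ _ _ V'(3)])
      show "continuous_on U' (\<psi> \<circ> f)"
        by (rule continuous_on_compose[OF f(1) continuous_on_subset[OF \<psi>(1) f(3)]])
      show "\<psi> \<circ> f \<in> U' \<rightarrow> V"
        using f(3) \<psi>(3) by (auto simp: image_subset_iff)
      show "inj_on (\<psi> \<circ> f) U'"
        by (rule comp_inj_on[OF f(2) inj_on_subset[OF \<psi>(2) f(3)]])
    qed
    with V'(2) show ?thesis by simp
  qed
  moreover have "finite D"
    using upper by (meson finite_atMost finite_subset atMost_iff subsetI)
  ultimately show ?thesis
    unfolding sa_dim_def D_def[symmetric] by (intro Max_eqI)
qed

definition coord_subspace :: "'n set \<Rightarrow> (real ^ 'n) set" where
  "coord_subspace D = {x. \<forall>i. i \<notin> D \<longrightarrow> x $ i = 0}"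

lemma subspace_coord_subspace: "subspace (coord_subspace D)"
  unfolding coord_subspace_def subspace_def by simp

lemma dim_coord_subspace: "dim (coord_subspace (D :: 'n::finite set)) = card D"
  unfolding coord_subspace_def dim_vec_eq[symmetric] by (rule dim_substandard_cart)

lemma openin_positive_part:
  fixes f :: "'a::topological_space \<Rightarrow> real ^ 'n"
  assumes "open T" "continuous_on T f"
  shows "openin (top_of_set V) {x \<in> V \<inter> T. \<forall>i. 0 < f x $ i}"
proof -
  have "open {y :: real ^ 'n. \<forall>i. 0 < y $ i}"
    unfolding Collect_all_eq by (intro open_INT) (auto intro: open_halfspace_component_gt_cart)
  then have "open (T \<inter> f -` {y. \<forall>i. 0 < y $ i})"
    using continuous_open_preimage[OF assms(2,1)] by blast
  moreover have "{x \<in> V \<inter> T. \<forall>i. 0 < f x $ i} = V \<inter> (T \<inter> f -` {y. \<forall>i. 0 < y $ i})" by auto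
  ultimately show ?thesis by (simp add: openin_open_Int)
qed

lemma jprob_add [simp]: "jprob (p + q) E = jprob p E + jprob q E"
  unfolding jprob_def by (simp add: sum.distrib)

lemma jprob_diff [simp]: "jprob (p - q) E = jprob p E - jprob q E"
  unfolding jprob_def by (simp add: sum_subtractf)

lemma jprob_scaleR [simp]: "jprob (c *\<^sub>R p) E = c * jprob p E"
  unfolding jprob_def by (simp add: sum_distrib_left)

lemma jprob_zero [simp]: "jprob 0 E = 0"
  unfolding jprob_def by simp

lemma jprob_axis [simp]: "jprob (axis w 1) E = (if E w then 1 else 0)"
  unfolding jprob_def by (simp add: axis_def)

lemma jprob_sum: "jprob (\<Sum>j\<in>J. F j) E = (\<Sum>j\<in>J. jprob (F j) E)"
  unfolding jprob_def by (simp add: sum.swap[of _ _ J])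

lemma continuous_on_jprob [continuous_intros]:
  "continuous_on S h \<Longrightarrow> continuous_on S (\<lambda>x. jprob (h x) E)"
  unfolding jprob_def by (intro continuous_intros)

lemma jprob_nonneg: assumes "\<forall>w. 0 \<le> p $ w" shows "0 \<le> jprob p E"
  unfolding jprob_def by (rule sum_nonneg) (use assms in blast)

lemma jprob_if: "jprob p E = (\<Sum>w\<in>UNIV. if E w then p $ w else 0)"
  unfolding jprob_def by (simp add: sum.inter_filter[symmetric])

lemma jprob_mono: "\<forall>w. 0 \<le> p $ w \<Longrightarrow> (\<And>w. E w \<Longrightarrow> F w) \<Longrightarrow> jprob p E \<le> jprob p F"
  unfolding jprob_if by (rule sum_mono) auto

lemma sum_jprob_partition:
  fixes Z :: "omega \<Rightarrow> 'z::finite"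
  shows "(\<Sum>z\<in>UNIV. jprob p (\<lambda>w. Z w = z \<and> E w)) = jprob p E"
proof -
  have inner: "(\<Sum>z\<in>UNIV. if Z w = z \<and> E w then p $ w else 0) = (if E w then p $ w else 0)" for w
    by (cases "E w") (simp_all add: sum.delta')
  show ?thesis
    unfolding jprob_if by (subst sum.swap) (simp only: inner)
qed

lemma prob_simplex_iff: "p \<in> prob_simplex \<longleftrightarrow> (\<forall>w. 0 \<le> p $ w) \<and> jprob p (\<lambda>_. True) = 1"
  unfolding prob_simplex_def jprob_def by simp

lemma two_row_table_rank_one:
  fixes n :: "bool \<Rightarrow> 'z::finite \<Rightarrow> real"
  defines "r x \<equiv> \<Sum>z'\<in>UNIV. n x z'"
  assumes rank_one: "\<And>z. z \<noteq> z\<^sub>0 \<Longrightarrow> n True z * (r True + r False) = r True * (n True z + n False z)"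
  shows "n x z * (r True + r False) = r x * (n True z + n False z)"
proof -
  define c where "c z = n True z + n False z" for z
  define s where "s = r True + r False"
  have s_sum: "s = (\<Sum>z\<in>UNIV. c z)"
    unfolding s_def r_def c_def by (simp add: sum.distrib)
  have "(\<Sum>z\<in>UNIV - {z\<^sub>0}. n True z) * s = (\<Sum>z\<in>UNIV - {z\<^sub>0}. n True z * s)"
    by (simp add: sum_distrib_right)
  also have "\<dots> = (\<Sum>z\<in>UNIV - {z\<^sub>0}. r True * c z)"
    using rank_one by (intro sum.cong) (auto simp: c_def s_def)
  also have "\<dots> = r True * (\<Sum>z\<in>UNIV - {z\<^sub>0}. c z)"
    by (simp add: sum_distrib_left)
  finally have "(r True - n True z\<^sub>0) * s = r True * (s - c z\<^sub>0)"
    unfolding s_sum r_def by (simp add: sum.remove[of UNIV z\<^sub>0])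
  then have "n True z\<^sub>0 * s = r True * c z\<^sub>0"
    by (simp add: algebra_simps)
  then have row_True: "n True z * s = r True * c z" for z
    using rank_one unfolding c_def s_def by (cases "z = z\<^sub>0") auto
  then have "n False z * s = r False * c z" for z
    using row_True[of z] unfolding c_def s_def by (simp add: algebra_simps)
  with row_True show ?thesis unfolding c_def s_def by (cases x) auto
qed

lemma cond_indep_binaryI:
  fixes X :: "omega \<Rightarrow> bool" and Z :: "omega \<Rightarrow> 'z::finite"
  assumes "\<And>c z. 0 < jprob p (\<lambda>w. W w = c) \<Longrightarrow> z \<noteq> z\<^sub>0 \<Longrightarrow>
     jprob p (\<lambda>w. X w \<and> Z w = z \<and> W w = c) * jprob p (\<lambda>w. W w = c)
       = jprob p (\<lambda>w. X w \<and> W w = c) * jprob p (\<lambda>w. Z w = z \<and> W w = c)"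
  shows "cond_indep p X Z W"
  unfolding cond_indep_def
proof (intro allI impI)
  fix c x z assume pos: "0 < jprob p (\<lambda>w. W w = c)"
  define n where "n x z = jprob p (\<lambda>w. X w = x \<and> Z w = z \<and> W w = c)" for x z
  have row: "(\<Sum>z\<in>UNIV. n x z) = jprob p (\<lambda>w. X w = x \<and> W w = c)" for x
    unfolding n_def using sum_jprob_partition[where Z=Z and p=p and E="\<lambda>w. X w = x \<and> W w = c"]
    by (simp add: conj_left_commute)
  have column: "n True z + n False z = jprob p (\<lambda>w. Z w = z \<and> W w = c)" for z
    using sum_jprob_partition[where Z=X and p=p and E="\<lambda>w. Z w = z \<and> W w = c"]
    unfolding n_def by (simp add: UNIV_bool)
  have total: "jprob p (\<lambda>w. X w = True \<and> W w = c) + jprob p (\<lambda>w. X w = False \<and> W w = c)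
      = jprob p (\<lambda>w. W w = c)"
    using sum_jprob_partition[where Z=X and p=p and E="\<lambda>w. W w = c"] by (simp add: UNIV_bool)
  have "n True z * ((\<Sum>z'\<in>UNIV. n True z') + (\<Sum>z'\<in>UNIV. n False z'))
      = (\<Sum>z'\<in>UNIV. n True z') * (n True z + n False z)" if "z \<noteq> z\<^sub>0" for z
    unfolding row total column using assms[OF pos that] by (simp add: n_def)
  then have "n x z * ((\<Sum>z'\<in>UNIV. n True z') + (\<Sum>z'\<in>UNIV. n False z'))
      = (\<Sum>z'\<in>UNIV. n x z') * (n True z + n False z)"
    by (rule two_row_table_rank_one)
  then show "jprob p (\<lambda>w. X w = x \<and> Z w = z \<and> W w = c) * jprob p (\<lambda>w. W w = c)
       = jprob p (\<lambda>w. X w = x \<and> W w = c) * jprob p (\<lambda>w. Z w = z \<and> W w = c)"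
    unfolding row total column by (simp add: n_def)
qed

section \<open>Models cut out by transversal product constraints\<close>

lemma jprob_eq_by_constraint:
  assumes p: "\<forall>w. 0 \<le> p $ w" and q: "\<forall>w. 0 \<le> q $ w" and N_S: "\<And>w. N w \<Longrightarrow> S w"
    and S: "jprob p S = jprob q S" and R: "jprob p R = jprob q R" and C: "jprob p C = jprob q C"
    and constraint_p: "0 < jprob p S \<Longrightarrow> jprob p N * jprob p S = jprob p R * jprob p C"
    and constraint_q: "0 < jprob q S \<Longrightarrow> jprob q N * jprob q S = jprob q R * jprob q C"
  shows "jprob p N = jprob q N"
proof (cases "0 < jprob p S")
  case True
  then have "jprob p N * jprob p S = jprob q N * jprob p S"
    using constraint_p constraint_q S R C by simp
  with True show ?thesis by simp
next
  case False
  then have "jprob p S = 0" "jprob q S = 0"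
    using jprob_nonneg[OF p, of S] S by simp_all
  moreover have "0 \<le> jprob p N" "jprob p N \<le> jprob p S" "0 \<le> jprob q N" "jprob q N \<le> jprob q S"
    using jprob_nonneg[OF p] jprob_nonneg[OF q] jprob_mono[OF p N_S] jprob_mono[OF q N_S] by auto
  ultimately show ?thesis by simp
qed

text \<open>The direction dir j changes P(N j) by one and no other term of any constraint, so
  constraint j can be solved for the coordinate at pc j; the coordinate at base absorbs
  the total mass.\<close>

locale transversal_constraints =
  fixes J :: "'j set" and base :: omega and pc :: "'j \<Rightarrow> omega" and dir :: "'j \<Rightarrow> dist"
    and N S R C :: "'j \<Rightarrow> omega \<Rightarrow> bool" and center :: dist
  assumes finite_J: "finite J"
    and base_notin_pc: "base \<notin> pc ` J"
    and dir_pc: "\<And>j k. j \<in> J \<Longrightarrow> k \<in> J \<Longrightarrow> dir k $ pc j = (if j = k then 1 else 0)"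
    and dir_base: "\<And>k. k \<in> J \<Longrightarrow> dir k $ base = 0"
    and jprob_dir_total: "\<And>k. k \<in> J \<Longrightarrow> jprob (dir k) (\<lambda>_. True) = 0"
    and jprob_dir_N: "\<And>j k. j \<in> J \<Longrightarrow> k \<in> J \<Longrightarrow> jprob (dir k) (N j) = (if j = k then 1 else 0)"
    and jprob_dir_S: "\<And>j k. j \<in> J \<Longrightarrow> k \<in> J \<Longrightarrow> jprob (dir k) (S j) = 0"
    and jprob_dir_R: "\<And>j k. j \<in> J \<Longrightarrow> k \<in> J \<Longrightarrow> jprob (dir k) (R j) = 0"
    and jprob_dir_C: "\<And>j k. j \<in> J \<Longrightarrow> k \<in> J \<Longrightarrow> jprob (dir k) (C j) = 0"
    and N_imp_S: "\<And>j w. j \<in> J \<Longrightarrow> N j w \<Longrightarrow> S j w"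
    and center_pos: "\<And>w. 0 < center $ w"
    and center_total: "jprob center (\<lambda>_. True) = 1"
    and center_constraint: "\<And>j. j \<in> J \<Longrightarrow>
      jprob center (N j) * jprob center (S j) = jprob center (R j) * jprob center (C j)"
begin

definition model :: "dist set" where
  "model = {p \<in> prob_simplex. \<forall>j\<in>J. 0 < jprob p (S j) \<longrightarrow>
     jprob p (N j) * jprob p (S j) = jprob p (R j) * jprob p (C j)}"

abbreviation free_coords :: "dist set" where
  "free_coords \<equiv> coord_subspace (- insert base (pc ` J))"

lemma dim_free_coords: "dim free_coords = 127 - card J"
proof -
  have "inj_on pc J"
    by (rule inj_onI) (metis dir_pc zero_neq_one)
  then have "card (insert base (pc ` J)) = card J + 1"
    using finite_J base_notin_pc by (simp add: card_image)
  moreover have "card (- insert base (pc ` J)) = CARD(omega) - card (insert base (pc ` J))"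
    unfolding Compl_eq_Diff_UNIV by (rule card_Diff_subset) auto
  ultimately show ?thesis
    by (simp add: dim_coord_subspace)
qed

definition proj :: "dist \<Rightarrow> dist" where
  "proj p = p - (p $ base) *\<^sub>R axis base 1 - (\<Sum>j\<in>J. (p $ pc j) *\<^sub>R dir j)"

lemma linear_proj: "linear proj"
  unfolding proj_def
  by (rule linearI)
    (simp_all add: algebra_simps sum.distrib scaleR_add_left scale_sum_right sum_subtractf)

lemma proj_in_free_coords: "proj p \<in> free_coords"
proof -
  have "proj p $ pc k = 0" if "k \<in> J" for k
  proof -
    have "(\<Sum>j\<in>J. p $ pc j * dir j $ pc k) = p $ pc k"
      using that finite_J by (simp add: dir_pc if_distrib[of "\<lambda>x. _ * x"] sum.delta cong: if_cong)
    then show ?thesis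
      using base_notin_pc that by (auto simp: proj_def axis_def)
  qed
  moreover have "proj p $ base = 0"
    by (simp add: proj_def dir_base)
  ultimately show ?thesis
    unfolding coord_subspace_def by auto
qed

lemma proj_fixes_free_coords:
  assumes "x \<in> free_coords" shows "proj x = x"
proof -
  have "x $ base = 0" "\<And>j. j \<in> J \<Longrightarrow> x $ pc j = 0"
    using assms unfolding coord_subspace_def by blast+
  then show ?thesis
    by (simp add: proj_def)
qed

lemma proj_axis_base: "proj (axis base 1) = 0"
proof -
  have "(\<Sum>j\<in>J. (axis base 1 $ pc j) *\<^sub>R dir j) = 0"
    using base_notin_pc by (intro sum.neutral) (auto simp: axis_def)
  then show ?thesis
    by (simp add: proj_def)
qed

lemma proj_dir: "k \<in> J \<Longrightarrow> proj (dir k) = 0"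
  using finite_J
  by (simp add: proj_def dir_pc dir_base if_distrib[of "\<lambda>x. x *\<^sub>R _"] sum.delta cong: if_cong)

lemma proj_kernel: "proj d = 0 \<Longrightarrow> d = (d $ base) *\<^sub>R axis base 1 + (\<Sum>j\<in>J. (d $ pc j) *\<^sub>R dir j)"
  unfolding proj_def by (simp add: algebra_simps)

lemma inj_on_proj_model: "inj_on proj model"
proof (rule inj_onI)
  fix p q assume p: "p \<in> model" and q: "q \<in> model" and eq: "proj p = proj q"
  define d where "d = p - q"
  have "proj d = 0"
    unfolding d_def using eq linear_diff[OF linear_proj] by simp
  then have d: "d = (d $ base) *\<^sub>R axis base 1 + (\<Sum>j\<in>J. (d $ pc j) *\<^sub>R dir j)"
    by (rule proj_kernel)
  have jprob_d:
    "jprob d E = d $ base * (if E base then 1 else 0) + (\<Sum>k\<in>J. d $ pc k * jprob (dir k) E)" for E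
    by (subst d) (simp add: jprob_sum)
  have simplex: "\<forall>w. 0 \<le> p $ w" "jprob p (\<lambda>_. True) = 1" "\<forall>w. 0 \<le> q $ w" "jprob q (\<lambda>_. True) = 1"
    using p q unfolding model_def prob_simplex_iff by auto
  then have "d $ base = 0"
    using jprob_d[of "\<lambda>_. True"] by (simp add: d_def jprob_dir_total)
  have "d $ pc j = 0" if j: "j \<in> J" for j
  proof -
    have "jprob d (N j) = d $ pc j"
      using finite_J j \<open>d $ base = 0\<close>
      by (simp add: jprob_d jprob_dir_N if_distrib[of "\<lambda>x. _ * x"] sum.delta cong: if_cong)
    moreover have "jprob p (X j) = jprob q (X j)" if "X \<in> {S, R, C}" for X
      using that j \<open>d $ base = 0\<close> jprob_d[of "X j"] jprob_dir_S jprob_dir_R jprob_dir_C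
      by (auto simp: d_def)
    then have "jprob p (N j) = jprob q (N j)"
      using p q j simplex N_imp_S unfolding model_def
      by (intro jprob_eq_by_constraint[of p q "N j" "S j" "R j" "C j"]) auto
    ultimately show ?thesis
      by (simp add: d_def)
  qed
  then have "d = 0"
    using \<open>d $ base = 0\<close> by (subst d) simp
  then show "p = q"
    by (simp add: d_def)
qed

lemma center_S_pos: "j \<in> J \<Longrightarrow> 0 < jprob center (S j)"
proof -
  assume j: "j \<in> J"
  have "{w. N j w} \<noteq> {}"
  proof
    assume "{w. N j w} = {}"
    then have "jprob (dir j) (N j) = 0"
      by (simp only: jprob_def sum.empty)
    with jprob_dir_N[OF j j] show False by simp
  qed
  then obtain w where "N j w" by blast
  have "center $ w = jprob center (\<lambda>u. u = w)"
    by (simp add: jprob_def)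
  also have "\<dots> \<le> jprob center (S j)"
    using center_pos N_imp_S[OF j \<open>N j w\<close>] by (intro jprob_mono) (auto intro: less_imp_le)
  finally show ?thesis
    using center_pos[of w] by linarith
qed

definition lift :: "dist \<Rightarrow> dist" where
  "lift x = center + x - jprob x (\<lambda>_. True) *\<^sub>R axis base 1"

definition correction :: "'j \<Rightarrow> dist \<Rightarrow> real" where
  "correction j q = jprob q (R j) * jprob q (C j) / jprob q (S j) - jprob q (N j)"

definition chart :: "dist \<Rightarrow> dist" where
  "chart x = lift x + (\<Sum>j\<in>J. correction j (lift x) *\<^sub>R dir j)"

definition chart_domain :: "dist set" where
  "chart_domain = {x. \<forall>j\<in>J. 0 < jprob (lift x) (S j)}"

lemma continuous_on_lift: "continuous_on A lift"
  unfolding lift_def by (intro continuous_intros)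

lemma open_chart_domain: "open chart_domain"
proof -
  have "chart_domain = (\<Inter>j\<in>J. {x. 0 < jprob (lift x) (S j)})"
    unfolding chart_domain_def by auto
  then show ?thesis
    by (simp add: open_INT finite_J open_Collect_less continuous_on_lift continuous_intros)
qed

lemma continuous_on_chart: "continuous_on chart_domain chart"
  unfolding chart_def correction_def
  by (intro continuous_intros continuous_on_lift) (auto simp: chart_domain_def)

lemma zero_in_chart_domain: "0 \<in> chart_domain"
  by (simp add: chart_domain_def lift_def center_S_pos)

lemma chart_zero: "chart 0 = center"
proof -
  have "correction j center = 0" if "j \<in> J" for j
    using center_constraint[OF that] center_S_pos[OF that] by (simp add: correction_def field_simps)
  then show ?thesis
    by (simp add: chart_def lift_def)
qed

lemma proj_chart:
  assumes "x \<in> free_coords" shows "proj (chart x) = proj center + x"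
proof -
  have "proj (chart x) = proj (lift x) + (\<Sum>j\<in>J. correction j (lift x) *\<^sub>R proj (dir j))"
    unfolding chart_def
    by (simp add: linear_add[OF linear_proj] linear_sum[OF linear_proj]
        linear_scale[OF linear_proj])
  also have "\<dots> = proj (lift x)"
    by (simp add: proj_dir)
  also have "\<dots> = proj center + x"
    unfolding lift_def using assms
    by (simp add: linear_add[OF linear_proj] linear_diff[OF linear_proj]
        linear_scale[OF linear_proj] proj_axis_base proj_fixes_free_coords)
  finally show ?thesis .
qed

lemma chart_in_model:
  assumes x: "x \<in> chart_domain" and nonneg: "\<forall>w. 0 \<le> chart x $ w"
  shows "chart x \<in> model"
proof -
  have jprob_chart:
    "jprob (chart x) E = jprob (lift x) E + (\<Sum>j\<in>J. correction j (lift x) * jprob (dir j) E)" for E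
    unfolding chart_def by (simp add: jprob_sum)
  have "jprob (chart x) (\<lambda>_. True) = 1"
    by (simp add: jprob_chart jprob_dir_total lift_def center_total)
  moreover have
    "jprob (chart x) (N j) * jprob (chart x) (S j) = jprob (chart x) (R j) * jprob (chart x) (C j)"
    if j: "j \<in> J" for j
  proof -
    have "jprob (chart x) (N j) = jprob (lift x) (N j) + correction j (lift x)"
      using finite_J j
      by (simp add: jprob_chart jprob_dir_N if_distrib[of "\<lambda>x. _ * x"] sum.delta' cong: if_cong)
    moreover have "jprob (chart x) (X j) = jprob (lift x) (X j)" if "X \<in> {S, R, C}" for X
      using that j by (auto simp: jprob_chart jprob_dir_S jprob_dir_R jprob_dir_C)
    moreover have "0 < jprob (lift x) (S j)"
      using x j unfolding chart_domain_def by blast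
    ultimately show ?thesis
      by (simp add: correction_def)
  qed
  ultimately show ?thesis
    using nonneg unfolding model_def prob_simplex_iff by blast
qed

theorem sa_dim_model: "sa_dim model = 127 - card J"
proof -
  define U where "U = {x \<in> free_coords \<inter> chart_domain. \<forall>w. 0 < chart x $ w}"
  have "sa_dim model = dim free_coords"
  proof (rule sa_dim_eqI[where U = U and \<phi> = chart and \<psi> = "\<lambda>p. proj p - proj center"])
    show "openin (top_of_set free_coords) U"
      unfolding U_def using open_chart_domain continuous_on_chart by (rule openin_positive_part)
    show "U \<noteq> {}"
      using zero_in_chart_domain center_pos
      by (auto simp: U_def chart_zero coord_subspace_def intro!: exI[of _ 0])
    show "continuous_on U chart"
      using continuous_on_chart by (rule continuous_on_subset) (auto simp: U_def)
    show "chart ` U \<subseteq> model"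
      using chart_in_model by (auto simp: U_def less_imp_le)
    show "proj (chart x) - proj center = x" if "x \<in> U" for x
      using that proj_chart by (simp add: U_def)
    show "continuous_on model (\<lambda>p. proj p - proj center)"
      using linear_proj
      by (intro continuous_intros linear_continuous_on) (simp add: linear_conv_bounded_linear)
    show "inj_on (\<lambda>p. proj p - proj center) model"
      using inj_on_proj_model by (auto simp: inj_on_def)
    show "(\<lambda>p. proj p - proj center) ` model \<subseteq> free_coords"
      using proj_in_free_coords subspace_coord_subspace by (auto intro: subspace_diff)
  qed (rule subspace_coord_subspace)
  then show ?thesis
    by (simp add: dim_free_coords)
qed

end

section \<open>Weak and strong ignorability\<close>

lemmas var_defs = varA_def varY_def varL_def varApot_def varYpot_def

lemma sum_UNIV_pair:
  "(\<Sum>w\<in>(UNIV :: ('a::finite \<times> 'b::finite) set). f w) = (\<Sum>a\<in>UNIV. \<Sum>b\<in>UNIV. f (a, b))"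
  by (simp add: sum.cartesian_product UNIV_Times_UNIV[symmetric] del: UNIV_Times_UNIV)

definition uniform :: dist where
  "uniform = (\<chi> w. 1 / 128)"

lemma jprob_uniform: "jprob uniform E =
  (\<Sum>l\<in>UNIV. \<Sum>a0\<in>UNIV. \<Sum>a1\<in>UNIV. \<Sum>y00\<in>UNIV. \<Sum>y01\<in>UNIV. \<Sum>y10\<in>UNIV. \<Sum>y11\<in>UNIV.
     if E (l, a0, a1, y00, y01, y10, y11) then 1 / 128 else 0)"
proof -
  have "jprob uniform E = (\<Sum>w\<in>UNIV. if E w then 1 / 128 else 0)"
    unfolding jprob_if uniform_def by (simp cong: if_cong)
  then show ?thesis
    by (simp only: sum_UNIV_pair)
qed

text \<open>The outcome in stratum l with A(l) = x and (Y(l,0), Y(l,1)) = (y0, y1), all potential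
  outcomes belonging to the other stratum being 0.\<close>

definition cell :: "bool \<Rightarrow> bool \<Rightarrow> bool \<Rightarrow> bool \<Rightarrow> omega" where
  "cell l x y0 y1 =
     (if l then (True, False, x, False, False, y0, y1) else (False, x, False, y0, y1, False, False))"

text \<open>Moves mass inside the table of A(l) against (Y(l,0), Y(l,1)) in stratum l without
  changing its margins.\<close>

fun interaction :: "bool \<times> bool \<times> bool \<Rightarrow> dist" where
  "interaction (l, y0, y1) = axis (cell l True y0 y1) 1 - axis (cell l True False False) 1
     - axis (cell l False y0 y1) 1 + axis (cell l False False False) 1"

fun pivot :: "bool \<times> bool \<times> bool \<Rightarrow> omega" where
  "pivot (l, y0, y1) = cell l True y0 y1"

text \<open>No cell has A(1) = 1 in stratum 0.\<close>

definition off_cells :: omega where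
  "off_cells = (False, False, True, False, False, False, False)"

definition interaction_index :: "(bool \<times> bool \<times> bool) set" where
  "interaction_index = {j. snd j \<noteq> (False, False)}"

definition stratum :: "bool \<times> bool \<times> bool \<Rightarrow> omega \<Rightarrow> bool" where
  "stratum j = (\<lambda>w. varL w = fst j)"

definition treated :: "bool \<times> bool \<times> bool \<Rightarrow> omega \<Rightarrow> bool" where
  "treated j = (\<lambda>w. varA w \<and> varL w = fst j)"

lemma interaction_index_eq: "interaction_index =
  {(False, True, False), (False, False, True), (False, True, True),
   (True, True, False), (True, False, True), (True, True, True)}"
  unfolding interaction_index_def by auto

lemma interaction_constraintsI:
  assumes J: "J \<subseteq> interaction_index"
    and N: "\<And>j k. j \<in> J \<Longrightarrow> k \<in> J \<Longrightarrow> jprob (interaction k) (N j) = (if j = k then 1 else 0)"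
    and C: "\<And>j k. j \<in> J \<Longrightarrow> k \<in> J \<Longrightarrow> jprob (interaction k) (C j) = 0"
    and N_imp_stratum: "\<And>j w. j \<in> J \<Longrightarrow> N j w \<Longrightarrow> stratum j w"
    and uniform_constraint: "\<And>j. j \<in> J \<Longrightarrow> jprob uniform (N j) * jprob uniform (stratum j)
      = jprob uniform (treated j) * jprob uniform (C j)"
  shows "transversal_constraints J off_cells pivot interaction N stratum treated C uniform"
proof
  have index: "j \<in> interaction_index" if "j \<in> J" for j
    using J that by blast
  show "finite J" by simp
  show "off_cells \<notin> pivot ` J"
    by (auto simp: off_cells_def cell_def split: if_splits)
  show "interaction k $ pivot j = (if j = k then 1 else 0)" if "j \<in> J" "k \<in> J" for j k
    using index[OF that(1)] index[OF that(2)] unfolding interaction_index_eq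
    by (auto simp: cell_def axis_def)
  show "interaction k $ off_cells = 0" for k
    by (cases k) (auto simp: off_cells_def cell_def axis_def)
  show "jprob (interaction k) (\<lambda>_. True) = 0" for k
    by (cases k) simp
  show "jprob (interaction k) (stratum j) = 0" "jprob (interaction k) (treated j) = 0" for j k
    by (cases k; auto simp: stratum_def treated_def cell_def var_defs)+
  show "0 < uniform $ w" for w
    by (simp add: uniform_def)
  show "jprob uniform (\<lambda>_. True) = 1"
    by (simp add: jprob_uniform)
qed (use N C N_imp_stratum uniform_constraint in auto)

text \<open>The index (l, \<not> a, a) stands for the equation of A \<perp> Y(a) | L at L = l,
  A = 1, Y(a) = 1.\<close>

definition weak_index :: "(bool \<times> bool \<times> bool) set" where
  "weak_index = {(l, y0, y1). y0 \<noteq> y1}"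

definition weak_N :: "bool \<times> bool \<times> bool \<Rightarrow> omega \<Rightarrow> bool" where
  "weak_N j = (\<lambda>w. varA w \<and> varY (snd (snd j)) w \<and> varL w = fst j)"

definition weak_C :: "bool \<times> bool \<times> bool \<Rightarrow> omega \<Rightarrow> bool" where
  "weak_C j = (\<lambda>w. varY (snd (snd j)) w \<and> varL w = fst j)"

definition strong_N :: "bool \<times> bool \<times> bool \<Rightarrow> omega \<Rightarrow> bool" where
  "strong_N j = (\<lambda>w. varA w \<and> (varY False w, varY True w) = snd j \<and> varL w = fst j)"

definition strong_C :: "bool \<times> bool \<times> bool \<Rightarrow> omega \<Rightarrow> bool" where
  "strong_C j = (\<lambda>w. (varY False w, varY True w) = snd j \<and> varL w = fst j)"

lemmas ignorability_event_defs =
  stratum_def treated_def weak_N_def weak_C_def strong_N_def strong_C_def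

lemma weak_index_eq:
  "weak_index = {(False, True, False), (False, False, True), (True, True, False), (True, False, True)}"
  unfolding weak_index_def by auto

interpretation full:
  transversal_constraints "{}" off_cells pivot interaction weak_N stratum treated weak_C uniform
  by (rule interaction_constraintsI) auto

interpretation weak:
  transversal_constraints weak_index off_cells pivot interaction weak_N stratum treated weak_C uniform
proof (rule interaction_constraintsI)
  show "weak_index \<subseteq> interaction_index"
    unfolding weak_index_def interaction_index_def by auto
qed (auto simp: weak_index_eq ignorability_event_defs cell_def var_defs jprob_uniform UNIV_bool)

interpretation strong: transversal_constraints
  interaction_index off_cells pivot interaction strong_N stratum treated strong_C uniform
  by (rule interaction_constraintsI)
    (auto simp: interaction_index_eq ignorability_event_defs cell_def var_defs jprob_uniform UNIV_bool)

lemma prob_simplex_eq_full_model: "prob_simplex = full.model"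
  by (simp add: full.model_def)

lemma weak_ign_model_eq: "weak_ign_model = weak.model"
proof (intro set_eqI iffI)
  fix p assume p: "p \<in> weak_ign_model"
  have "jprob p (weak_N j) * jprob p (stratum j) = jprob p (treated j) * jprob p (weak_C j)"
    if "0 < jprob p (stratum j)" for j
  proof -
    obtain l y0 a where j: "j = (l, y0, a)" by (cases j)
    have "cond_indep p varA (varY a) varL"
      using p unfolding weak_ign_model_def by blast
    from this[unfolded cond_indep_def, rule_format, of l True True] show ?thesis
      using that unfolding j by (simp add: ignorability_event_defs)
  qed
  then show "p \<in> weak.model"
    using p unfolding weak_ign_model_def weak.model_def by blast
next
  fix p assume p: "p \<in> weak.model"
  have "cond_indep p varA (varY a) varL" for a
  proof (rule cond_indep_binaryI[where z\<^sub>0 = False])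
    fix c and z :: bool assume "0 < jprob p (\<lambda>w. varL w = c)" "z \<noteq> False"
    moreover have "(c, \<not> a, a) \<in> weak_index"
      by (simp add: weak_index_def)
    ultimately show "jprob p (\<lambda>w. varA w \<and> varY a w = z \<and> varL w = c) * jprob p (\<lambda>w. varL w = c)
      = jprob p (\<lambda>w. varA w \<and> varL w = c) * jprob p (\<lambda>w. varY a w = z \<and> varL w = c)"
      using p unfolding weak.model_def by (auto simp: ignorability_event_defs)
  qed
  then show "p \<in> weak_ign_model"
    using p unfolding weak_ign_model_def weak.model_def by blast
qed

lemma strong_ign_model_eq: "strong_ign_model = strong.model"
proof (intro set_eqI iffI)
  fix p assume p: "p \<in> strong_ign_model"
  have "jprob p (strong_N j) * jprob p (stratum j) = jprob p (treated j) * jprob p (strong_C j)"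
    if "0 < jprob p (stratum j)" for j
  proof -
    obtain l y where j: "j = (l, y)" by (cases j)
    have "cond_indep p varA (\<lambda>w. (varY False w, varY True w)) varL"
      using p unfolding strong_ign_model_def by blast
    from this[unfolded cond_indep_def, rule_format, of l True y] show ?thesis
      using that unfolding j by (simp add: ignorability_event_defs)
  qed
  then show "p \<in> strong.model"
    using p unfolding strong_ign_model_def strong.model_def by blast
next
  fix p assume p: "p \<in> strong.model"
  have "cond_indep p varA (\<lambda>w. (varY False w, varY True w)) varL"
  proof (rule cond_indep_binaryI[where z\<^sub>0 = "(False, False)"])
    fix c z assume "0 < jprob p (\<lambda>w. varL w = c)" "z \<noteq> (False, False)"
    moreover have "(c, z) \<in> interaction_index"
      using \<open>z \<noteq> (False, False)\<close> by (simp add: interaction_index_def)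
    ultimately show "jprob p (\<lambda>w. varA w \<and> (varY False w, varY True w) = z \<and> varL w = c) * jprob p (\<lambda>w. varL w = c)
      = jprob p (\<lambda>w. varA w \<and> varL w = c) * jprob p (\<lambda>w. (varY False w, varY True w) = z \<and> varL w = c)"
      using p unfolding strong.model_def by (auto simp: ignorability_event_defs)
  qed
  then show "p \<in> strong_ign_model"
    using p unfolding strong_ign_model_def strong.model_def by blast
qed

section \<open>The NPSEM-IE model\<close>

definition Apot :: "omega \<Rightarrow> bool \<times> bool" where
  "Apot = (\<lambda>w. (varApot False w, varApot True w))"

definition Ypot :: "omega \<Rightarrow> bool \<times> bool \<times> bool \<times> bool" where
  "Ypot = (\<lambda>w. (varYpot False False w, varYpot False True w,
                 varYpot True False w, varYpot True True w))"

lemma npsem_ie_model_eq: "npsem_ie_model = {p \<in> prob_simplex. indep3 p varL Apot Ypot}"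
  unfolding npsem_ie_model_def Apot_def Ypot_def ..

definition omega_of :: "bool \<Rightarrow> bool \<times> bool \<Rightarrow> bool \<times> bool \<times> bool \<times> bool \<Rightarrow> omega" where
  "omega_of l a y = (l, fst a, snd a, y)"

lemma components_omega_of [simp]:
  "varL (omega_of l a y) = l" "Apot (omega_of l a y) = a" "Ypot (omega_of l a y) = y"
  by (auto simp: omega_of_def Apot_def Ypot_def var_defs split: prod.split)

lemma omega_of_components: "omega_of (varL w) (Apot w) (Ypot w) = w"
  by (auto simp: omega_of_def Apot_def Ypot_def var_defs split: prod.split)

lemma omega_eqI:
  assumes "varL u = varL w" "Apot u = Apot w" "Ypot u = Ypot w" shows "u = w"
proof -
  have "u = omega_of (varL u) (Apot u) (Ypot u)"
    by (simp only: omega_of_components)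
  also have "\<dots> = w"
    unfolding assms by (rule omega_of_components)
  finally show ?thesis .
qed

lemma sum_omega: "(\<Sum>w\<in>UNIV. f w) = (\<Sum>l\<in>UNIV. \<Sum>a\<in>UNIV. \<Sum>y\<in>UNIV. f (omega_of l a y))"
  by (simp add: sum_UNIV_pair omega_of_def)

definition marginal :: "dist \<Rightarrow> (omega \<Rightarrow> 'z) \<Rightarrow> 'z \<Rightarrow> real" where
  "marginal p Z z = jprob p (\<lambda>w. Z w = z)"

lemma sum_marginal:
  fixes Z :: "omega \<Rightarrow> 'z::finite"
  assumes "p \<in> prob_simplex" shows "(\<Sum>z\<in>UNIV. marginal p Z z) = 1"
  using sum_jprob_partition[where p = p and Z = Z and E = "\<lambda>_. True"] assms
  by (simp add: marginal_def prob_simplex_iff)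

definition product_dist ::
  "(bool \<Rightarrow> real) \<Rightarrow> (bool \<times> bool \<Rightarrow> real) \<Rightarrow> (bool \<times> bool \<times> bool \<times> bool \<Rightarrow> real) \<Rightarrow> dist" where
  "product_dist P Q R = (\<chi> w. P (varL w) * Q (Apot w) * R (Ypot w))"

lemma sum_product3:
  fixes f g h :: "_ \<Rightarrow> real"
  shows "(\<Sum>x\<in>A. \<Sum>y\<in>B. \<Sum>z\<in>C. f x * g y * h z) = sum f A * sum g B * sum h C"
  by (simp only: sum_distrib_left[symmetric] sum_distrib_right[symmetric])

lemma jprob_product_dist_box:
  "jprob (product_dist P Q R) (\<lambda>w. EL (varL w) \<and> EA (Apot w) \<and> EY (Ypot w))
     = (\<Sum>l\<in>UNIV. if EL l then P l else 0) * (\<Sum>a\<in>UNIV. if EA a then Q a else 0)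
       * (\<Sum>y\<in>UNIV. if EY y then R y else 0)"
  unfolding jprob_if sum_omega product_dist_def sum_product3[symmetric]
  by (intro sum.cong refl) auto

lemma jprob_product_dist:
  "jprob (product_dist P Q R) (\<lambda>_. True) = sum P UNIV * sum Q UNIV * sum R UNIV"
  "jprob (product_dist P Q R) (\<lambda>w. varL w = l) = P l * sum Q UNIV * sum R UNIV"
  "jprob (product_dist P Q R) (\<lambda>w. Apot w = a) = sum P UNIV * Q a * sum R UNIV"
  "jprob (product_dist P Q R) (\<lambda>w. Ypot w = y) = sum P UNIV * sum Q UNIV * R y"
  "jprob (product_dist P Q R) (\<lambda>w. varL w = l \<and> Apot w = a \<and> Ypot w = y) = P l * Q a * R y"
  using jprob_product_dist_box[of P Q R "\<lambda>_. True" "\<lambda>_. True" "\<lambda>_. True"]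
    jprob_product_dist_box[of P Q R "\<lambda>l'. l' = l" "\<lambda>_. True" "\<lambda>_. True"]
    jprob_product_dist_box[of P Q R "\<lambda>_. True" "\<lambda>a'. a' = a" "\<lambda>_. True"]
    jprob_product_dist_box[of P Q R "\<lambda>_. True" "\<lambda>_. True" "\<lambda>y'. y' = y"]
    jprob_product_dist_box[of P Q R "\<lambda>l'. l' = l" "\<lambda>a'. a' = a" "\<lambda>y'. y' = y"]
  by (simp_all add: sum.delta')

lemma product_dist_in_npsem_ie_model:
  assumes "\<forall>w. 0 \<le> product_dist P Q R $ w" "sum P UNIV = 1" "sum Q UNIV = 1" "sum R UNIV = 1"
  shows "product_dist P Q R \<in> npsem_ie_model"
  using assms by (simp add: npsem_ie_model_eq prob_simplex_iff indep3_def jprob_product_dist)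

lemma product_of_marginals:
  assumes "indep3 p varL Apot Ypot"
  shows "product_dist (marginal p varL) (marginal p Apot) (marginal p Ypot) = p"
  unfolding vec_eq_iff
proof
  fix w
  have point: "(\<lambda>u. varL u = varL w \<and> Apot u = Apot w \<and> Ypot u = Ypot w) = (\<lambda>u. u = w)"
    by (rule ext) (blast intro: omega_eqI)
  have "product_dist (marginal p varL) (marginal p Apot) (marginal p Ypot) $ w
      = jprob p (\<lambda>u. varL u = varL w \<and> Apot u = Apot w \<and> Ypot u = Ypot w)"
    using assms[unfolded indep3_def, rule_format, of "varL w" "Apot w" "Ypot w"]
    by (simp add: product_dist_def marginal_def)
  also have "\<dots> = p $ w"
    unfolding point by (simp add: jprob_def)
  finally show "product_dist (marginal p varL) (marginal p Apot) (marginal p Ypot) $ w = p $ w" .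
qed

definition complete_at :: "'z \<Rightarrow> ('z \<Rightarrow> real) \<Rightarrow> 'z \<Rightarrow> real" where
  "complete_at z\<^sub>0 q z = (if z = z\<^sub>0 then 1 - (\<Sum>z'\<in>UNIV - {z\<^sub>0}. q z') else q z)"

lemma sum_complete_at: "(\<Sum>z\<in>UNIV. complete_at z\<^sub>0 q z) = (1 :: real)" for z\<^sub>0 :: "'z::finite"
proof -
  have "(\<Sum>z\<in>UNIV - {z\<^sub>0}. complete_at z\<^sub>0 q z) = (\<Sum>z\<in>UNIV - {z\<^sub>0}. q z)"
    by (intro sum.cong) (auto simp: complete_at_def)
  then show ?thesis
    by (simp add: sum.remove[of UNIV z\<^sub>0] complete_at_def)
qed

lemma complete_at_cong: "(\<And>z. z \<noteq> z\<^sub>0 \<Longrightarrow> q z = q' z) \<Longrightarrow> complete_at z\<^sub>0 q = complete_at z\<^sub>0 q'"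
  unfolding complete_at_def by (intro ext) (auto intro!: sum.cong)

lemma complete_at_eq_self: "(\<Sum>z\<in>UNIV. q z) = 1 \<Longrightarrow> complete_at z\<^sub>0 q = q" for z\<^sub>0 :: "'z::finite"
  unfolding complete_at_def by (intro ext) (simp add: sum.remove[of UNIV z\<^sub>0])

lemma continuous_on_complete_at [continuous_intros]:
  "(\<And>z. continuous_on S (\<lambda>x. f x z)) \<Longrightarrow> continuous_on S (\<lambda>x. complete_at z\<^sub>0 (f x) z)"
  unfolding complete_at_def by (cases "z = z\<^sub>0") (simp_all add: continuous_intros)

definition ref_point :: omega where
  "ref_point = (False, False, False, False, False, False, False)"

lemma components_ref_point [simp]:
  "varL ref_point = False" "Apot ref_point = (False, False)"
  "Ypot ref_point = (False, False, False, False)"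
  by (simp_all add: ref_point_def Apot_def Ypot_def var_defs)

definition L_axis :: "omega set" where
  "L_axis = {w. varL w \<noteq> varL ref_point \<and> Apot w = Apot ref_point \<and> Ypot w = Ypot ref_point}"

definition A_axis :: "omega set" where
  "A_axis = {w. varL w = varL ref_point \<and> Apot w \<noteq> Apot ref_point \<and> Ypot w = Ypot ref_point}"

definition Y_axis :: "omega set" where
  "Y_axis = {w. varL w = varL ref_point \<and> Apot w = Apot ref_point \<and> Ypot w \<noteq> Ypot ref_point}"

lemmas axis_defs = L_axis_def A_axis_def Y_axis_def

lemma card_axes: "card (L_axis \<union> A_axis \<union> Y_axis) = 19"
proof -
  have L: "L_axis = (\<lambda>l. omega_of l (Apot ref_point) (Ypot ref_point)) ` (UNIV - {varL ref_point})"
  proof (intro equalityI subsetI)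
    fix w assume "w \<in> L_axis"
    then show "w \<in> (\<lambda>l. omega_of l (Apot ref_point) (Ypot ref_point)) ` (UNIV - {varL ref_point})"
      unfolding L_axis_def by (intro image_eqI[of _ _ "varL w"] omega_eqI) auto
  qed (auto simp: L_axis_def)
  have A: "A_axis = (\<lambda>a. omega_of (varL ref_point) a (Ypot ref_point)) ` (UNIV - {Apot ref_point})"
  proof (intro equalityI subsetI)
    fix w assume "w \<in> A_axis"
    then show "w \<in> (\<lambda>a. omega_of (varL ref_point) a (Ypot ref_point)) ` (UNIV - {Apot ref_point})"
      unfolding A_axis_def by (intro image_eqI[of _ _ "Apot w"] omega_eqI) auto
  qed (auto simp: A_axis_def)
  have Y: "Y_axis = (\<lambda>y. omega_of (varL ref_point) (Apot ref_point) y) ` (UNIV - {Ypot ref_point})"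
  proof (intro equalityI subsetI)
    fix w assume "w \<in> Y_axis"
    then show "w \<in> (\<lambda>y. omega_of (varL ref_point) (Apot ref_point) y) ` (UNIV - {Ypot ref_point})"
      unfolding Y_axis_def by (intro image_eqI[of _ _ "Ypot w"] omega_eqI) auto
  qed (auto simp: Y_axis_def)
  have "inj (\<lambda>l. omega_of l a y)" "inj (\<lambda>a. omega_of l a y)" "inj (\<lambda>y. omega_of l a y)" for l a y
    by (rule injI; metis components_omega_of)+
  then have "card L_axis = 1" "card A_axis = 3" "card Y_axis = 15"
    unfolding L A Y by (simp_all add: card_image inj_on_diff card_Diff_singleton)
  moreover have "L_axis \<inter> A_axis = {}" "(L_axis \<union> A_axis) \<inter> Y_axis = {}"
    unfolding axis_defs by auto
  ultimately show ?thesis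
    by (simp add: card_Un_disjoint)
qed

text \<open>The marginal probabilities of the values other than the reference ones, stored at the
  points that differ from ref_point in a single block.\<close>

definition marginal_coords :: "dist \<Rightarrow> dist" where
  "marginal_coords p = (\<chi> w. of_bool (w \<in> L_axis) * marginal p varL (varL w)
     + of_bool (w \<in> A_axis) * marginal p Apot (Apot w)
     + of_bool (w \<in> Y_axis) * marginal p Ypot (Ypot w))"

definition product_chart :: "dist \<Rightarrow> dist" where
  "product_chart x = product_dist
     (complete_at (varL ref_point) (\<lambda>l. x $ omega_of l (Apot ref_point) (Ypot ref_point)))
     (complete_at (Apot ref_point) (\<lambda>a. x $ omega_of (varL ref_point) a (Ypot ref_point)))
     (complete_at (Ypot ref_point) (\<lambda>y. x $ omega_of (varL ref_point) (Apot ref_point) y))"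

lemma marginal_coords_in_axes: "marginal_coords p \<in> coord_subspace (L_axis \<union> A_axis \<union> Y_axis)"
  by (simp add: coord_subspace_def marginal_coords_def)

lemma marginals_product_chart:
  "marginal (product_chart x) varL
     = complete_at (varL ref_point) (\<lambda>l. x $ omega_of l (Apot ref_point) (Ypot ref_point))"
  "marginal (product_chart x) Apot
     = complete_at (Apot ref_point) (\<lambda>a. x $ omega_of (varL ref_point) a (Ypot ref_point))"
  "marginal (product_chart x) Ypot
     = complete_at (Ypot ref_point) (\<lambda>y. x $ omega_of (varL ref_point) (Apot ref_point) y)"
  by (simp_all add: fun_eq_iff marginal_def product_chart_def jprob_product_dist sum_complete_at)

lemma marginal_coords_product_chart:
  assumes "x \<in> coord_subspace (L_axis \<union> A_axis \<union> Y_axis)"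
  shows "marginal_coords (product_chart x) = x"
  unfolding vec_eq_iff
proof
  fix w
  consider "w \<in> L_axis" | "w \<in> A_axis" | "w \<in> Y_axis" | "w \<notin> L_axis \<union> A_axis \<union> Y_axis"
    by blast
  then show "marginal_coords (product_chart x) $ w = x $ w"
  proof cases
    case 1
    then show ?thesis
      by (auto simp: marginal_coords_def marginals_product_chart axis_defs complete_at_def)
        (metis omega_of_components)
  next
    case 2
    then show ?thesis
      by (auto simp: marginal_coords_def marginals_product_chart axis_defs complete_at_def)
        (metis omega_of_components)
  next
    case 3
    then show ?thesis
      by (auto simp: marginal_coords_def marginals_product_chart axis_defs complete_at_def)
        (metis omega_of_components)
  next
    case 4
    then have "x $ w = 0"
      using assms unfolding coord_subspace_def by blast
    with 4 show ?thesis
      by (simp add: marginal_coords_def)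
  qed
qed

lemma product_chart_marginal_coords:
  assumes "p \<in> npsem_ie_model" shows "product_chart (marginal_coords p) = p"
proof -
  have p: "p \<in> prob_simplex" "indep3 p varL Apot Ypot"
    using assms by (simp_all add: npsem_ie_model_eq)
  have "complete_at (varL ref_point)
      (\<lambda>l. marginal_coords p $ omega_of l (Apot ref_point) (Ypot ref_point))
      = complete_at (varL ref_point) (marginal p varL)"
    by (intro complete_at_cong) (auto simp: marginal_coords_def axis_defs)
  moreover have "complete_at (Apot ref_point)
      (\<lambda>a. marginal_coords p $ omega_of (varL ref_point) a (Ypot ref_point))
      = complete_at (Apot ref_point) (marginal p Apot)"
    by (intro complete_at_cong) (auto simp: marginal_coords_def axis_defs)
  moreover have "complete_at (Ypot ref_point)
      (\<lambda>y. marginal_coords p $ omega_of (varL ref_point) (Apot ref_point) y)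
      = complete_at (Ypot ref_point) (marginal p Ypot)"
    by (intro complete_at_cong) (auto simp: marginal_coords_def axis_defs)
  ultimately show ?thesis
    using p by (simp add: product_chart_def complete_at_eq_self sum_marginal product_of_marginals)
qed

lemma product_chart_in_npsem_ie_model:
  "\<forall>w. 0 \<le> product_chart x $ w \<Longrightarrow> product_chart x \<in> npsem_ie_model"
  unfolding product_chart_def
  by (rule product_dist_in_npsem_ie_model) (simp_all add: sum_complete_at)

lemma uniform_in_npsem_ie_model: "uniform \<in> npsem_ie_model"
proof -
  have "product_dist (\<lambda>_. 1 / 2) (\<lambda>_. 1 / 4) (\<lambda>_. 1 / 16) \<in> npsem_ie_model"
    by (rule product_dist_in_npsem_ie_model) (simp_all add: product_dist_def)
  moreover have "product_dist (\<lambda>_. 1 / 2) (\<lambda>_. 1 / 4) (\<lambda>_. 1 / 16) = uniform"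
    by (simp add: uniform_def product_dist_def)
  ultimately show ?thesis
    by simp
qed

theorem sa_dim_npsem_ie_model: "sa_dim npsem_ie_model = 19"
proof -
  define V where "V = coord_subspace (L_axis \<union> A_axis \<union> Y_axis)"
  define U where "U = {x \<in> V \<inter> UNIV. \<forall>w. 0 < product_chart x $ w}"
  have continuous_product_chart: "continuous_on UNIV product_chart"
    unfolding product_chart_def product_dist_def
    by (intro continuous_on_vec_lambda continuous_intros)
  have "sa_dim npsem_ie_model = dim V"
  proof (rule sa_dim_eqI[where U = U and \<phi> = product_chart and \<psi> = marginal_coords])
    show "subspace V"
      unfolding V_def by (rule subspace_coord_subspace)
    show "openin (top_of_set V) U"
      unfolding U_def using open_UNIV continuous_product_chart by (rule openin_positive_part)
    have "product_chart (marginal_coords uniform) = uniform"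
      using uniform_in_npsem_ie_model by (rule product_chart_marginal_coords)
    then have "marginal_coords uniform \<in> U"
      using marginal_coords_in_axes by (simp add: U_def V_def uniform_def)
    then show "U \<noteq> {}" by blast
    show "continuous_on U product_chart"
      using continuous_product_chart by (rule continuous_on_subset) simp
    show "product_chart ` U \<subseteq> npsem_ie_model"
      using product_chart_in_npsem_ie_model by (auto simp: U_def less_imp_le)
    show "marginal_coords (product_chart x) = x" if "x \<in> U" for x
      using that marginal_coords_product_chart by (simp add: U_def V_def)
    show "continuous_on npsem_ie_model marginal_coords"
      unfolding marginal_coords_def marginal_def
      by (intro continuous_on_vec_lambda continuous_intros)
    show "inj_on marginal_coords npsem_ie_model"
      by (metis inj_onI product_chart_marginal_coords)
    show "marginal_coords ` npsem_ie_model \<subseteq> V"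
      using marginal_coords_in_axes by (auto simp: V_def)
  qed
  then show ?thesis
    by (simp add: V_def dim_coord_subspace card_axes)
qed

theorem mainTheorem5:
  shows "sa_dim prob_simplex = 127 \<and> sa_dim weak_ign_model = 123 \<and>
         sa_dim strong_ign_model = 121 \<and> sa_dim npsem_ie_model = 19 \<and>
         sa_dim weak_ign_model - sa_dim npsem_ie_model = 104"
proof -
  have "sa_dim prob_simplex = 127"
    using full.sa_dim_model by (simp add: prob_simplex_eq_full_model)
  moreover have "sa_dim weak_ign_model = 123"
    using weak.sa_dim_model by (simp add: weak_ign_model_eq weak_index_eq)
  moreover have "sa_dim strong_ign_model = 121"
    using strong.sa_dim_model by (simp add: strong_ign_model_eq interaction_index_eq)
  ultimately show ?thesis
    using sa_dim_npsem_ie_model by simp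
qed

end
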